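(* Let $S$ be a numerical semigroup and $G=G(S)$. Let $y$ be a nonloopy vertex of $G$. Then there is no neighbor $z$ of $y$ in $G$ with $z-y\in S^*$.
   Context: A numerical semigroup is a subset $S\subseteq\mathbb N$ containing $0$, closed under addition, with finite complement; $S^*=S\setminus\{0\}$, $m=\min S^*$, $X=\{s\in S^*: s-m\notin S\}$. The graph $G(S)$ has edge set all subsets $\{x,y\}\subseteq X$ ($x=y$ allowed) with $x+y\in X$, and vertex set the endvertices of these edges. A vertex $y$ is nonloopy if $2y\notin X$; $z$ is a neighbor of $y$ if $z\in X$ and $y+z\in X$. *)

theory Defs
  imports Main
begin

definition numerical_semigroup :: "nat set \<Rightarrow> bool" where
  "numerical_semigroup S \<longleftrightarrow> 0 \<in> S \<and> (\<forall>x\<in>S. \<forall>y\<in>S. x + y \<in> S) \<and> finite (UNIV - S)"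

definition nz :: "nat set \<Rightarrow> nat set" where
  "nz S = S - {0}"

definition mult :: "nat set \<Rightarrow> nat" where
  "mult S = Min (nz S)"

(* X = {s \<in> S^* : s - m \<notin> S}, with s - m an integer difference *)
definition Xset :: "nat set \<Rightarrow> nat set" where
  "Xset S = {s \<in> nz S. \<not> (int s - int (mult S) \<ge> 0 \<and> nat (int s - int (mult S)) \<in> S)}"

definition edges :: "nat set \<Rightarrow> nat set set" where
  "edges S = {{x, y} | x y. x \<in> Xset S \<and> y \<in> Xset S \<and> x + y \<in> Xset S}"

definition vertices :: "nat set \<Rightarrow> nat set" where
  "vertices S = \<Union> (edges S)"

definition nonloopy :: "nat set \<Rightarrow> nat \<Rightarrow> bool" where
  "nonloopy S y \<longleftrightarrow> 2 * y \<notin> Xset S"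

definition neighbor :: "nat set \<Rightarrow> nat \<Rightarrow> nat \<Rightarrow> bool" where
  "neighbor S y z \<longleftrightarrow> z \<in> Xset S \<and> y + z \<in> Xset S"

end

theory Submission
  imports Defs
begin

text \<open>If z = y + s with s \<in> S is a neighbour of y, then 2y + s = y + z \<in> X.
  Membership in X passes from x + s to x \<in> S* whenever s \<in> S: were 2y - m \<in> S,
  then also 2y + s - m \<in> S. Hence 2y \<in> X, i.e. y has a loop.\<close>

lemma Xset_iff:
  "x \<in> Xset S \<longleftrightarrow> x \<in> nz S \<and> (mult S \<le> x \<longrightarrow> x - mult S \<notin> S)"
  by (auto simp: Xset_def nat_diff_distrib)

lemma numerical_semigroup_add:
  "numerical_semigroup S \<Longrightarrow> a \<in> S \<Longrightarrow> b \<in> S \<Longrightarrow> a + b \<in> S"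
  by (simp add: numerical_semigroup_def)

lemma Xset_add_summand:
  assumes "numerical_semigroup S" and "x \<in> nz S" and "s \<in> S" and "x + s \<in> Xset S"
  shows "x \<in> Xset S"
proof -
  have "x - mult S \<notin> S" if "mult S \<le> x"
  proof
    assume "x - mult S \<in> S"
    then have "x - mult S + s \<in> S"
      using numerical_semigroup_add[OF assms(1) _ assms(3)] by blast
    moreover have "x - mult S + s = x + s - mult S"
      using that by simp
    ultimately have "x + s - mult S \<in> S"
      by simp
    then show False
      using assms(4) that by (simp add: Xset_iff)
  qed
  then show ?thesis
    using assms(2) by (simp add: Xset_iff)
qed

lemma vertices_subset_Xset: "vertices S \<subseteq> Xset S"
  by (auto simp: vertices_def edges_def)

theorem lemma4p12:
  fixes S :: "nat set" and y :: nat
  assumes "numerical_semigroup S"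
    and "y \<in> vertices S"
    and "nonloopy S y"
  shows "\<not> (\<exists>z. neighbor S y z \<and> int z - int y > 0 \<and> nat (int z - int y) \<in> nz S)"
proof
  assume "\<exists>z. neighbor S y z \<and> int z - int y > 0 \<and> nat (int z - int y) \<in> nz S"
  then obtain z where "neighbor S y z" and "int z - int y > 0" and "nat (int z - int y) \<in> nz S"
    by blast
  then obtain s where s: "s \<in> S" and "neighbor S y (y + s)"
    by (intro that[of "nat (int z - int y)"]) (auto simp: nz_def nat_diff_distrib)
  have "y \<in> nz S"
    using assms(2) vertices_subset_Xset Xset_iff by blast
  then have "2 * y \<in> nz S"
    using numerical_semigroup_add[OF assms(1)] by (auto simp: nz_def mult_2)
  moreover have "2 * y + s \<in> Xset S"
    using \<open>neighbor S y (y + s)\<close> by (simp add: neighbor_def mult_2 add.assoc)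
  ultimately have "2 * y \<in> Xset S"
    using Xset_add_summand[OF assms(1) _ s] by blast
  with assms(3) show False
    by (simp add: nonloopy_def)
qed

end
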